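(* Let $G$ be an interval graph and $D_s\neq D_t$ dominating multisets of $G$ with $|D_s|=|D_t|$. Then there exists a minimum-cost matching $M'$ between $D_s$ and $D_t$ such that at least one of the following holds: (i) there are $(u,v)\in M'$ and $u'\in\mathrm{succ}(u,v)$ such that $\mathrm{slide}(D_s,u,u')$ is dominating; (ii) there are $(u,v)\in M'$ and $v'\in\mathrm{succ}(v,u)$ such that $\mathrm{slide}(D_t,v,v')$ is dominating.
   Context: A multiset $H$ of vertices is a function $H:V\to\mathbb{N}\cup\{0\}$; it is dominating if its support $\{v:H(v)\ge1\}$ is a dominating set. $\mathrm{slide}(D,u,w)=(D\setminus\{u\})\cup\{w\}$. $\mathrm{succ}(u,w)$ is the set of vertices following $u$ on some shortest path from $u$ to $w$, with $\mathrm{succ}(u,u)=\emptyset$. A matching between equal-size multisets $D_s,D_t$ is a multiset $M$ on $V\times V$ with exactly $D_s(v)$ pairs $(v,\cdot)$ and $D_t(v)$ pairs $(\cdot,v)$ for each $v$; cost $c(M)=\sum_{(x,y)}d_G(x,y)M(x,y)$; a minimum-cost matching minimizes this cost. (The graph is assumed connected so that costs are finite.) *)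

theory Defs
  imports Complex_Main "HOL-Library.Multiset"
begin

definition simple_graph :: "'a set \<Rightarrow> ('a \<Rightarrow> 'a \<Rightarrow> bool) \<Rightarrow> bool" where
  "simple_graph V E \<longleftrightarrow> finite V \<and> (\<forall>u v. E u v \<longrightarrow> u \<in> V \<and> v \<in> V)
     \<and> (\<forall>u v. E u v \<longrightarrow> E v u) \<and> (\<forall>v. \<not> E v v)"

definition interval_graph :: "'a set \<Rightarrow> ('a \<Rightarrow> 'a \<Rightarrow> bool) \<Rightarrow> bool" where
  "interval_graph V E \<longleftrightarrow> simple_graph V E \<and>
     (\<exists>l r :: 'a \<Rightarrow> real. (\<forall>v\<in>V. l v \<le> r v) \<and>
        (\<forall>u\<in>V. \<forall>v\<in>V. u \<noteq> v \<longrightarrow> (E u v \<longleftrightarrow> max (l u) (l v) \<le> min (r u) (r v))))"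

definition walk :: "'a set \<Rightarrow> ('a \<Rightarrow> 'a \<Rightarrow> bool) \<Rightarrow> 'a list \<Rightarrow> bool" where
  "walk V E p \<longleftrightarrow> p \<noteq> [] \<and> set p \<subseteq> V \<and> (\<forall>i. Suc i < length p \<longrightarrow> E (p ! i) (p ! Suc i))"

definition connected_graph :: "'a set \<Rightarrow> ('a \<Rightarrow> 'a \<Rightarrow> bool) \<Rightarrow> bool" where
  "connected_graph V E \<longleftrightarrow> (\<forall>u\<in>V. \<forall>v\<in>V. \<exists>p. walk V E p \<and> hd p = u \<and> last p = v)"

definition gdist :: "'a set \<Rightarrow> ('a \<Rightarrow> 'a \<Rightarrow> bool) \<Rightarrow> 'a \<Rightarrow> 'a \<Rightarrow> nat" where
  "gdist V E u v = (LEAST n. \<exists>p. walk V E p \<and> hd p = u \<and> last p = v \<and> length p = Suc n)"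

definition shortest_path :: "'a set \<Rightarrow> ('a \<Rightarrow> 'a \<Rightarrow> bool) \<Rightarrow> 'a list \<Rightarrow> 'a \<Rightarrow> 'a \<Rightarrow> bool" where
  "shortest_path V E p u v \<longleftrightarrow> walk V E p \<and> hd p = u \<and> last p = v \<and> length p = Suc (gdist V E u v)"

text \<open>succ(u,w): vertices following u on some shortest u-w path (empty if u = w).\<close>
definition succ :: "'a set \<Rightarrow> ('a \<Rightarrow> 'a \<Rightarrow> bool) \<Rightarrow> 'a \<Rightarrow> 'a \<Rightarrow> 'a set" where
  "succ V E u w = {p ! 1 | p. shortest_path V E p u w \<and> 2 \<le> length p}"

definition dominating_mset :: "'a set \<Rightarrow> ('a \<Rightarrow> 'a \<Rightarrow> bool) \<Rightarrow> 'a multiset \<Rightarrow> bool" where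
  "dominating_mset V E D \<longleftrightarrow> set_mset D \<subseteq> V \<and> (\<forall>v\<in>V. v \<in># D \<or> (\<exists>u\<in>#D. E u v))"

definition slide :: "'a multiset \<Rightarrow> 'a \<Rightarrow> 'a \<Rightarrow> 'a multiset" where
  "slide D u w = add_mset w (D - {#u#})"

definition is_matching :: "'a multiset \<Rightarrow> 'a multiset \<Rightarrow> ('a \<times> 'a) multiset \<Rightarrow> bool" where
  "is_matching Ds Dt M \<longleftrightarrow> image_mset fst M = Ds \<and> image_mset snd M = Dt"

definition match_cost :: "'a set \<Rightarrow> ('a \<Rightarrow> 'a \<Rightarrow> bool) \<Rightarrow> ('a \<times> 'a) multiset \<Rightarrow> nat" where
  "match_cost V E M = (\<Sum>(x,y)\<in>#M. gdist V E x y)"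

definition min_cost_matching :: "'a set \<Rightarrow> ('a \<Rightarrow> 'a \<Rightarrow> bool) \<Rightarrow> 'a multiset \<Rightarrow> 'a multiset \<Rightarrow> ('a \<times> 'a) multiset \<Rightarrow> bool" where
  "min_cost_matching V E Ds Dt M \<longleftrightarrow> is_matching Ds Dt M \<and>
     (\<forall>M'. is_matching Ds Dt M' \<longrightarrow> match_cost V E M \<le> match_cost V E M')"

end

theory Submission
  imports Defs
begin

(* Among the minimum-cost matchings choose one that also minimises the potential
   \<Sum>(a,b)\<in>M. (l a - l b)^2 + (r a - r b)^2 of the interval endpoints. Suppose no slide along
   a matched pair keeps domination, and take a mismatched pair (u, v) with min (r u) (r v)
   smallest, say r u \<le> r v. Sliding u one step towards v fails, so some vertex w
   left of v is dominated in Ds by u alone; the vertex t of Dt dominating w is matched to some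
   s, and the pairs (u, v), (s, t) cross. Since a shortest path of an interval graph meets every
   interval lying between its ends, re-matching them as (u, t), (s, v) does not increase the cost,
   while it strictly decreases the potential: a contradiction. *)

section \<open>Walks and distances\<close>

lemma walk_iff_successively: "walk V E p \<longleftrightarrow> p \<noteq> [] \<and> set p \<subseteq> V \<and> successively E p"
  by (simp add: walk_def successively_conv_nth)

lemma walk_singleton [simp]: "walk V E [a] \<longleftrightarrow> a \<in> V"
  by (simp add: walk_iff_successively)

lemma walk_Cons_Cons [simp]:
  "walk V E (a # b # p) \<longleftrightarrow> a \<in> V \<and> E a b \<and> walk V E (b # p)"
  by (auto simp: walk_iff_successively)

lemma walk_append:
  "walk V E p \<Longrightarrow> walk V E q \<Longrightarrow> E (last p) (hd q) \<Longrightarrow> walk V E (p @ q)"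
  by (simp add: walk_iff_successively successively_append_iff)

lemma walk_take: "walk V E p \<Longrightarrow> 0 < n \<Longrightarrow> walk V E (take n p)"
  unfolding walk_iff_successively
  by (metis append_take_drop_id set_take_subset successively_append_iff take_eq_Nil
      order_trans less_numeral_extra(3))

lemma walk_drop: "walk V E p \<Longrightarrow> n < length p \<Longrightarrow> walk V E (drop n p)"
  unfolding walk_iff_successively
  by (metis append_take_drop_id set_drop_subset successively_append_iff drop_eq_Nil
      order_trans not_le)

lemma walk_rev: "walk V E p \<Longrightarrow> (\<And>a b. E a b \<Longrightarrow> E b a) \<Longrightarrow> walk V E (rev p)"
  by (auto simp: walk_iff_successively intro: successively_mono)

lemma walk_nth_in: "walk V E p \<Longrightarrow> i < length p \<Longrightarrow> p ! i \<in> V"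
  unfolding walk_def by auto

lemma walk_nth_edge: "walk V E p \<Longrightarrow> Suc i < length p \<Longrightarrow> E (p ! i) (p ! Suc i)"
  unfolding walk_def by blast

lemma gdist_le_walk:
  assumes "walk V E p" "hd p = a" "last p = b"
  shows "gdist V E a b \<le> length p - 1"
proof -
  have "length p = Suc (length p - 1)" using assms(1) by (simp add: walk_def)
  then show ?thesis unfolding gdist_def using assms by (intro Least_le) blast
qed

lemma gdist_self: "a \<in> V \<Longrightarrow> gdist V E a a = 0"
  using gdist_le_walk[of V E "[a]" a a] by simp

lemma gdist_prefix_le: "walk V E p \<Longrightarrow> m < length p \<Longrightarrow> gdist V E (hd p) (p ! m) \<le> m"
  using gdist_le_walk[of V E "take (Suc m) p" "hd p" "p ! m"] walk_take[of V E p "Suc m"]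
  by (simp add: hd_take last_conv_nth walk_def)

lemma gdist_suffix_le:
  "walk V E p \<Longrightarrow> m < length p \<Longrightarrow> gdist V E (p ! m) (last p) \<le> length p - 1 - m"
  using gdist_le_walk[of V E "drop m p" "p ! m" "last p"] walk_drop[of V E p m]
  by (simp add: hd_drop_conv_nth)

lemma shortest_path_nth:
  assumes "shortest_path V E p a b"
  shows "walk V E p" "length p = Suc (gdist V E a b)" "p ! 0 = a" "p ! gdist V E a b = b"
proof -
  show w: "walk V E p" and len: "length p = Suc (gdist V E a b)"
    using assms unfolding shortest_path_def by auto
  have "p \<noteq> []" using len by auto
  then show "p ! 0 = a" "p ! gdist V E a b = b"
    using assms len unfolding shortest_path_def by (auto simp: hd_conv_nth last_conv_nth)
qed

lemma shortest_path_succ: "shortest_path V E p a b \<Longrightarrow> 2 \<le> length p \<Longrightarrow> p ! 1 \<in> succ V E a b"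
  unfolding succ_def by blast

lemma succ_in_vertices: "a' \<in> succ V E a b \<Longrightarrow> a' \<in> V"
  unfolding succ_def shortest_path_def walk_def by auto

locale connected_simple_graph =
  fixes V :: "'a set" and E :: "'a \<Rightarrow> 'a \<Rightarrow> bool"
  assumes simple: "simple_graph V E"
    and connected: "connected_graph V E"
begin

lemma edge_in_V: "E a b \<Longrightarrow> a \<in> V \<and> b \<in> V"
  using simple unfolding simple_graph_def by blast

lemma edge_sym: "E a b \<Longrightarrow> E b a"
  using simple unfolding simple_graph_def by blast

lemma edge_irrefl: "\<not> E a a"
  using simple unfolding simple_graph_def by blast

lemma shortest_path_exists:
  assumes "a \<in> V" "b \<in> V"
  obtains p where "shortest_path V E p a b"
proof -
  obtain p where p: "walk V E p" "hd p = a" "last p = b"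
    using connected assms unfolding connected_graph_def by blast
  then have "length p = Suc (length p - 1)" by (simp add: walk_def)
  with p have "\<exists>n p. walk V E p \<and> hd p = a \<and> last p = b \<and> length p = Suc n" by blast
  from LeastI_ex[OF this] show ?thesis
    using that unfolding shortest_path_def gdist_def by blast
qed

lemma gdist_pos:
  assumes "a \<in> V" "b \<in> V" "a \<noteq> b"
  shows "1 \<le> gdist V E a b"
proof (rule ccontr)
  assume "\<not> 1 \<le> gdist V E a b"
  moreover obtain p where "shortest_path V E p a b" using shortest_path_exists assms by blast
  ultimately have "walk V E p" "hd p = a" "last p = b" "length p = 1"
    unfolding shortest_path_def by auto
  then show False using assms(3) by (cases p) auto
qed

lemma gdist_edge: "E a b \<Longrightarrow> gdist V E a b = 1"
  using gdist_le_walk[of V E "[a, b]" a b] gdist_pos[of a b] edge_in_V edge_irrefl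
  by fastforce

lemma gdist_sym:
  assumes "a \<in> V" "b \<in> V"
  shows "gdist V E a b = gdist V E b a"
proof -
  have "gdist V E x y \<le> gdist V E y x" if xy: "x \<in> V" "y \<in> V" for x y
  proof -
    obtain p where p: "shortest_path V E p y x" using shortest_path_exists xy by blast
    then have "walk V E (rev p)" using walk_rev edge_sym unfolding shortest_path_def by blast
    with p show ?thesis
      using gdist_le_walk[of V E "rev p" x y] by (auto simp: shortest_path_def hd_rev last_rev)
  qed
  with assms show ?thesis by (simp add: le_antisym)
qed

lemma gdist_triangle:
  assumes "a \<in> V" "b \<in> V" "c \<in> V"
  shows "gdist V E a c \<le> gdist V E a b + gdist V E b c"
proof -
  obtain p where p: "shortest_path V E p a b" using shortest_path_exists assms by blast
  obtain q where q: "shortest_path V E q b c" using shortest_path_exists assms by blast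
  show ?thesis
  proof (cases "tl q = []")
    case True
    then have "c = b" using q unfolding shortest_path_def walk_def
      by (metis last_ConsL list.collapse)
    then show ?thesis by simp
  next
    case False
    have "q = b # tl q" using q unfolding shortest_path_def walk_def by (metis list.collapse)
    then have "walk V E (tl q)" "E b (hd (tl q))" "last (tl q) = c"
      using q False unfolding shortest_path_def by (metis walk_Cons_Cons list.collapse last_ConsR)+
    then have "walk V E (p @ tl q)" using p walk_append unfolding shortest_path_def by metis
    moreover have "hd (p @ tl q) = a" "last (p @ tl q) = c"
      using p \<open>last (tl q) = c\<close> False unfolding shortest_path_def walk_def by auto
    ultimately have "gdist V E a c \<le> length (p @ tl q) - 1" by (rule gdist_le_walk)
    then show ?thesis using p q unfolding shortest_path_def by simp
  qed
qed

lemma succ_nonempty: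
  assumes "a \<in> V" "b \<in> V" "a \<noteq> b"
  obtains a' where "a' \<in> succ V E a b"
proof -
  obtain p where p: "shortest_path V E p a b" using shortest_path_exists assms by blast
  then have "2 \<le> length p" using gdist_pos assms unfolding shortest_path_def by fastforce
  then show ?thesis using shortest_path_succ[OF p] that by blast
qed

lemma succ_of_edge: "E a b \<Longrightarrow> b \<in> succ V E a b"
  using shortest_path_succ[of V E "[a, b]" a b] gdist_edge edge_in_V
  by (simp add: shortest_path_def)

end

section \<open>Matchings\<close>

lemma finite_matchings: "finite {M. is_matching A B M}"
proof (rule finite_subset)
  show "{M. is_matching A B M} \<subseteq> multisets_of_size (set_mset A \<times> set_mset B) (size A)"
    unfolding is_matching_def multisets_of_size_def by force
qed auto

lemma matching_exists:
  assumes "size A = size B"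
  obtains M where "is_matching A B M"
proof -
  obtain xs ys where "mset xs = A" "mset ys = B" by (metis ex_mset)
  with assms have "is_matching A B (mset (zip xs ys))"
    unfolding is_matching_def by (metis size_mset map_fst_zip map_snd_zip mset_map)
  then show ?thesis by (rule that)
qed

lemma ex_min_on_finite:
  fixes f :: "'a \<Rightarrow> 'b::linorder"
  assumes "finite S" "S \<noteq> {}"
  obtains x where "x \<in> S" "\<And>y. y \<in> S \<Longrightarrow> f x \<le> f y"
proof -
  have "Min (f ` S) \<in> f ` S" using assms by simp
  then obtain x where "x \<in> S" "f x = Min (f ` S)" by (metis imageE)
  then show ?thesis using assms(1) by (intro that) auto
qed

lemma min_cost_matching_exists_minimizing:
  fixes f :: "('a \<times> 'a) multiset \<Rightarrow> 'b::linorder"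
  assumes "size A = size B"
  obtains M where "min_cost_matching V E A B M"
    "\<And>M'. min_cost_matching V E A B M' \<Longrightarrow> f M \<le> f M'"
proof -
  have fin: "finite {M. min_cost_matching V E A B M}"
    using finite_matchings by (rule rev_finite_subset) (auto simp: min_cost_matching_def)
  obtain M0 where "is_matching A B M0" by (rule matching_exists[OF assms])
  then have "{M. is_matching A B M} \<noteq> {}" by blast
  then obtain M1 where "M1 \<in> {M. is_matching A B M}"
    "\<And>M. M \<in> {M. is_matching A B M} \<Longrightarrow> match_cost V E M1 \<le> match_cost V E M"
    using ex_min_on_finite[OF finite_matchings, where f = "match_cost V E"] by blast
  then have "{M. min_cost_matching V E A B M} \<noteq> {}" unfolding min_cost_matching_def by blast
  then obtain M where "M \<in> {M. min_cost_matching V E A B M}"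
    "\<And>M'. M' \<in> {M. min_cost_matching V E A B M} \<Longrightarrow> f M \<le> f M'"
    using ex_min_on_finite[OF fin, where f = f] by blast
  then show ?thesis using that by simp
qed

lemma is_matching_memD: "is_matching A B M \<Longrightarrow> (a, b) \<in># M \<Longrightarrow> a \<in># A \<and> b \<in># B"
  unfolding is_matching_def by force

lemma is_matching_partner:
  assumes "is_matching A B M" "b \<in># B"
  obtains a where "(a, b) \<in># M"
  using assms unfolding is_matching_def by force

lemma is_matching_remove:
  "is_matching A B M \<Longrightarrow> (u, v) \<in># M \<Longrightarrow> is_matching (A - {#u#}) (B - {#v#}) (M - {#(u, v)#})"
  unfolding is_matching_def by (auto simp: image_mset_Diff)

lemma is_matching_transpose: "is_matching A B M \<Longrightarrow> is_matching B A (image_mset prod.swap M)"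
  unfolding is_matching_def by (simp add: multiset.map_comp comp_def)

lemma mismatched_pair_minimizing:
  fixes f :: "'a \<Rightarrow> 'a \<Rightarrow> 'b::linorder"
  assumes "is_matching A B M" "A \<noteq> B"
  obtains u v where "(u, v) \<in># M" "u \<noteq> v"
    "\<And>a b. (a, b) \<in># M \<Longrightarrow> a \<noteq> b \<Longrightarrow> f u v \<le> f a b"
proof -
  let ?P = "{p \<in> set_mset M. fst p \<noteq> snd p}"
  have "?P \<noteq> {}"
  proof
    assume "?P = {}"
    then have "image_mset fst M = image_mset snd M" by (intro image_mset_cong) auto
    then show False using assms unfolding is_matching_def by simp
  qed
  moreover have "finite ?P" by simp
  ultimately obtain p where "p \<in> ?P" "\<And>q. q \<in> ?P \<Longrightarrow> case_prod f p \<le> case_prod f q"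
    using ex_min_on_finite[where f = "case_prod f"] by blast
  moreover obtain u v where "p = (u, v)" by fastforce
  ultimately show ?thesis using that[of u v] by fastforce
qed

definition exchange_partners ::
  "('a \<times> 'a) multiset \<Rightarrow> 'a \<Rightarrow> 'a \<Rightarrow> 'a \<Rightarrow> 'a \<Rightarrow> ('a \<times> 'a) multiset" where
  "exchange_partners M u v s t = add_mset (u, t) (add_mset (s, v) (M - {#(u, v)#} - {#(s, t)#}))"

lemma remove_two_pairs:
  assumes "(u, v) \<in># M" "(s, t) \<in># M - {#(u, v)#}"
  shows "M = add_mset (u, v) (add_mset (s, t) (M - {#(u, v)#} - {#(s, t)#}))"
  using assms by (simp del: diff_diff_add_mset)

lemma sum_exchange_partners:
  fixes f :: "'a \<Rightarrow> 'a \<Rightarrow> 'b::comm_monoid_add"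
  assumes "(u, v) \<in># M" "(s, t) \<in># M - {#(u, v)#}"
  shows "(\<Sum>(x, y)\<in>#exchange_partners M u v s t. f x y) + (f u v + f s t)
       = (\<Sum>(x, y)\<in>#M. f x y) + (f u t + f s v)"
  by (subst (2) remove_two_pairs[OF assms]) (simp add: exchange_partners_def ac_simps)

lemma is_matching_exchange_partners:
  assumes "is_matching A B M" "(u, v) \<in># M" "(s, t) \<in># M - {#(u, v)#}"
  shows "is_matching A B (exchange_partners M u v s t)"
  using assms(1) unfolding is_matching_def exchange_partners_def
  by (subst (asm) (1 2) remove_two_pairs[OF assms(2,3)]) (simp add: add_mset_commute)

lemma min_cost_matching_exchange_partners:
  assumes M: "min_cost_matching V E A B M"
    and uv: "(u, v) \<in># M" and st: "(s, t) \<in># M - {#(u, v)#}"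
    and "gdist V E u t + gdist V E s v \<le> gdist V E u v + gdist V E s t"
  shows "min_cost_matching V E A B (exchange_partners M u v s t)"
proof -
  have "match_cost V E (exchange_partners M u v s t) \<le> match_cost V E M"
    using sum_exchange_partners[OF uv st, of "gdist V E"] assms(4)
    unfolding match_cost_def by linarith
  then show ?thesis
    using M is_matching_exchange_partners[OF _ uv st] unfolding min_cost_matching_def by fastforce
qed

section \<open>Interval graphs\<close>

lemma square_exchange:
  fixes a b c d :: real
  shows "(a - b)\<^sup>2 + (c - d)\<^sup>2 = (a - d)\<^sup>2 + (c - b)\<^sup>2 + 2 * ((a - c) * (d - b))"
  by (simp add: power2_eq_square algebra_simps)

locale interval_model = connected_simple_graph +
  fixes l r :: "'a \<Rightarrow> real"
  assumes interval_le: "\<And>v. v \<in> V \<Longrightarrow> l v \<le> r v"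
    and adjacent_iff: "\<And>u v. u \<in> V \<Longrightarrow> v \<in> V \<Longrightarrow> u \<noteq> v \<Longrightarrow>
                         E u v \<longleftrightarrow> max (l u) (l v) \<le> min (r u) (r v)"
begin

definition overlap :: "'a \<Rightarrow> 'a \<Rightarrow> bool" where
  "overlap a b \<longleftrightarrow> l a \<le> r b \<and> l b \<le> r a"

lemma overlap_iff: "a \<in> V \<Longrightarrow> b \<in> V \<Longrightarrow> overlap a b \<longleftrightarrow> a = b \<or> E a b"
  using adjacent_iff interval_le unfolding overlap_def by (cases "a = b") auto

lemma gdist_le_1_if_overlap: "a \<in> V \<Longrightarrow> b \<in> V \<Longrightarrow> overlap a b \<Longrightarrow> gdist V E a b \<le> 1"
  using overlap_iff gdist_edge gdist_self by fastforce

lemma walk_overlap: "walk V E p \<Longrightarrow> Suc i < length p \<Longrightarrow> overlap (p ! i) (p ! Suc i)"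
  using overlap_iff walk_nth_edge walk_nth_in by (metis Suc_lessD)

text \<open>A walk is connected, so the union of its intervals is an interval.\<close>
lemma walk_covers_point:
  assumes w: "walk V E p" and i: "i < length p" and j: "j < length p"
    and "l (p ! i) \<le> c" "c \<le> r (p ! j)"
  obtains k where "k < length p" "l (p ! k) \<le> c" "c \<le> r (p ! k)"
proof (rule ccontr)
  assume "\<not> thesis"
  then have avoid: "\<And>k. k < length p \<Longrightarrow> c < l (p ! k) \<or> r (p ! k) < c"
    using that by force
  have left_of_c: "r (p ! k) < c \<longleftrightarrow> r (p ! 0) < c" if "k < length p" for k
    using that
  proof (induction k)
    case (Suc k)
    have "overlap (p ! k) (p ! Suc k)" using walk_overlap w Suc.prems by blast
    moreover have "l (p ! k) \<le> r (p ! k)" "l (p ! Suc k) \<le> r (p ! Suc k)"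
      using interval_le walk_nth_in w Suc.prems by (meson Suc_lessD)+
    ultimately have "r (p ! Suc k) < c \<longleftrightarrow> r (p ! k) < c"
      using avoid[of k] avoid[of "Suc k"] Suc.prems unfolding overlap_def by auto
    then show ?case using Suc by simp
  qed simp
  show False
    using left_of_c[OF i] left_of_c[OF j] avoid[OF i] assms(4,5) by auto
qed

text \<open>In both lemmas below, a shortest path from \<open>a\<close> has to cross the right endpoint of the
  middle vertex (\<open>v\<close>, resp. \<open>s\<close>), at a path vertex adjacent to it; rerouting through that
  vertex does not lengthen the path.\<close>
lemma gdist_le_if_target_between:
  assumes V: "a \<in> V" "b \<in> V" "v \<in> V" and "a \<noteq> b" and "r b \<le> r v" "r v < l a"
  shows "gdist V E a v \<le> gdist V E a b"
proof -
  obtain p where sp: "shortest_path V E p a b" using shortest_path_exists V by blast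
  define k where "k = gdist V E a b"
  have p: "walk V E p" "p ! 0 = a" "p ! k = b" "length p = Suc k"
    using shortest_path_nth[OF sp] unfolding k_def by auto
  have "1 \<le> k" using gdist_pos V \<open>a \<noteq> b\<close> k_def by auto
  have q: "walk V E (take k p)" using walk_take[OF p(1)] \<open>1 \<le> k\<close> by simp
  have "overlap (p ! (k - 1)) (p ! Suc (k - 1))"
    using walk_overlap[OF p(1), of "k - 1"] p \<open>1 \<le> k\<close> by simp
  then have "l (take k p ! (k - 1)) \<le> r v"
    using p \<open>1 \<le> k\<close> assms(5) unfolding overlap_def by simp
  moreover have "r v \<le> r (take k p ! 0)" using p \<open>1 \<le> k\<close> assms(6) interval_le V by force
  moreover have "k - 1 < length (take k p)" "0 < length (take k p)" using p \<open>1 \<le> k\<close> by auto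
  ultimately obtain m
    where "m < length (take k p)" "l (take k p ! m) \<le> r v" "r v \<le> r (take k p ! m)"
    using walk_covers_point[OF q] by blast
  then have m: "m < k" "l (p ! m) \<le> r v" "r v \<le> r (p ! m)" using p by auto
  have pm: "p ! m \<in> V" using walk_nth_in[OF p(1)] p m by simp
  have "overlap (p ! m) v" using m interval_le V unfolding overlap_def by force
  then have "gdist V E (p ! m) v \<le> 1" using gdist_le_1_if_overlap pm V by blast
  moreover have "gdist V E a (p ! m) \<le> m" using gdist_prefix_le[OF p(1)] p m sp
    unfolding shortest_path_def by auto
  moreover have "gdist V E a v \<le> gdist V E a (p ! m) + gdist V E (p ! m) v"
    using gdist_triangle V pm by blast
  ultimately show ?thesis using m k_def by linarith
qed

lemma gdist_le_if_source_between:
  assumes V: "a \<in> V" "s \<in> V" "v \<in> V" and "a \<noteq> v" and "r a \<le> r s" "r s < l v"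
  shows "gdist V E s v \<le> gdist V E a v"
proof -
  obtain p where sp: "shortest_path V E p a v" using shortest_path_exists V by blast
  define k where "k = gdist V E a v"
  have p: "walk V E p" "p ! 0 = a" "p ! k = v" "length p = Suc k"
    using shortest_path_nth[OF sp] unfolding k_def by auto
  have "1 \<le> k" using gdist_pos V \<open>a \<noteq> v\<close> k_def by auto
  have q: "walk V E (drop 1 p)" using walk_drop[OF p(1)] p \<open>1 \<le> k\<close> by simp
  have "overlap (p ! 0) (p ! Suc 0)" using walk_overlap[OF p(1), of 0] p \<open>1 \<le> k\<close> by simp
  then have "l (drop 1 p ! 0) \<le> r s" using p assms(5) unfolding overlap_def by simp
  moreover have "r s \<le> r (drop 1 p ! (k - 1))" using p \<open>1 \<le> k\<close> assms(6) interval_le V by force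
  moreover have "k - 1 < length (drop 1 p)" "0 < length (drop 1 p)" using p \<open>1 \<le> k\<close> by auto
  ultimately obtain m
    where "m < length (drop 1 p)" "l (drop 1 p ! m) \<le> r s" "r s \<le> r (drop 1 p ! m)"
    using walk_covers_point[OF q] by blast
  then have m: "m < k" "l (p ! Suc m) \<le> r s" "r s \<le> r (p ! Suc m)" using p by auto
  have pm: "p ! Suc m \<in> V" using walk_nth_in[OF p(1)] p m by simp
  have "overlap s (p ! Suc m)" using m interval_le V unfolding overlap_def by force
  then have "gdist V E s (p ! Suc m) \<le> 1" using gdist_le_1_if_overlap pm V by blast
  moreover have "gdist V E (p ! Suc m) v \<le> k - Suc m"
    using gdist_suffix_le[OF p(1), of "Suc m"] p m sp unfolding shortest_path_def by auto
  moreover have "gdist V E s v \<le> gdist V E s (p ! Suc m) + gdist V E (p ! Suc m) v"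
    using gdist_triangle V pm by blast
  ultimately show ?thesis using m k_def by linarith
qed

lemma succ_towards_right:
  assumes V: "a \<in> V" "v \<in> V" and "a \<noteq> v" and "r a \<le> r v"
  shows "\<exists>a'\<in>succ V E a v. overlap a a' \<and> r a \<le> r a' \<and> l a' \<le> l v"
proof (cases "E a v")
  case True
  then show ?thesis using succ_of_edge[OF True] overlap_iff[OF V] assms(4) by blast
next
  case False
  then have "r a < l v"
    using overlap_iff V assms(3,4) interval_le unfolding overlap_def by force
  obtain p where sp: "shortest_path V E p a v" using shortest_path_exists V by blast
  define k where "k = gdist V E a v"
  have p: "walk V E p" "p ! 0 = a" "p ! k = v" "length p = Suc k"
    using shortest_path_nth[OF sp] unfolding k_def by auto
  have "1 \<le> k" using gdist_pos V assms(3) k_def by auto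
  have a'V: "p ! 1 \<in> V" using walk_nth_in[OF p(1)] p \<open>1 \<le> k\<close> by simp
  have "p ! 1 \<in> succ V E a v" using shortest_path_succ[OF sp] p \<open>1 \<le> k\<close> by simp
  moreover have "overlap a (p ! 1)" using walk_overlap[OF p(1), of 0] p \<open>1 \<le> k\<close> by simp
  moreover have "r a \<le> r (p ! 1)"
  proof (rule ccontr)
    assume "\<not> r a \<le> r (p ! 1)"
    moreover have "p ! 1 \<noteq> v" using calculation \<open>r a < l v\<close> interval_le V by force
    ultimately have "gdist V E a v \<le> gdist V E (p ! 1) v"
      using gdist_le_if_source_between[OF a'V V(1,2)] \<open>r a < l v\<close> by simp
    moreover have "gdist V E (p ! 1) v \<le> k - 1"
      using gdist_suffix_le[OF p(1), of 1] sp p \<open>1 \<le> k\<close> unfolding shortest_path_def by simp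
    ultimately show False using \<open>1 \<le> k\<close> k_def by linarith
  qed
  moreover have "l (p ! 1) \<le> l v" using calculation(2) \<open>r a < l v\<close> unfolding overlap_def by simp
  ultimately show ?thesis by blast
qed

lemma dominating_overlap:
  assumes "dominating_mset V E D" "w \<in> V"
  obtains z where "z \<in># D" "overlap z w"
proof -
  obtain z where "z \<in># D" "z = w \<or> E z w"
    using assms unfolding dominating_mset_def by blast
  moreover have "z \<in> V" using assms(1) calculation(1) unfolding dominating_mset_def by blast
  ultimately show ?thesis using that overlap_iff[OF _ assms(2)] by blast
qed

lemma private_vertex_if_slide_fails:
  assumes A: "dominating_mset V E A" and "u' \<in> V"
    and "\<not> dominating_mset V E (slide A u u')"
  shows "\<exists>w\<in>V. overlap u w \<and> \<not> overlap u' w \<and> (\<forall>z\<in>#A - {#u#}. \<not> overlap z w)"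
proof -
  have AV: "set_mset A \<subseteq> V" using A unfolding dominating_mset_def by blast
  then have "set_mset (slide A u u') \<subseteq> V" using \<open>u' \<in> V\<close>
    unfolding slide_def by (auto dest: in_diffD)
  then obtain w where w: "w \<in> V" "\<not> (w \<in># slide A u u' \<or> (\<exists>z\<in>#slide A u u'. E z w))"
    using assms(3) unfolding dominating_mset_def by blast
  have not_u': "\<not> overlap u' w"
    using w overlap_iff[OF \<open>u' \<in> V\<close> w(1)] by (auto simp: slide_def)
  have not_rest: "\<not> overlap z w" if "z \<in># A - {#u#}" for z
  proof -
    have "z \<in> V" using that AV by (auto dest: in_diffD)
    then show ?thesis using that w overlap_iff[OF _ w(1)] by (auto simp: slide_def)
  qed
  obtain z where "z \<in># A" "overlap z w" by (rule dominating_overlap[OF A w(1)])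
  moreover have "z \<in># A - {#u#}" if "z \<in># A" "z \<noteq> u" for z
    using that by (simp add: in_diff_count)
  ultimately have "overlap u w" using not_rest by blast
  with w(1) not_u' not_rest show ?thesis by blast
qed

text \<open>The tie-breaking potential of a matching is the sum of \<open>endpoint_sqdist\<close> over its pairs;
  uncrossing two pairs of the kind found below strictly decreases it.\<close>
definition endpoint_sqdist :: "'a \<Rightarrow> 'a \<Rightarrow> real" where
  "endpoint_sqdist a b = (l a - l b)\<^sup>2 + (r a - r b)\<^sup>2"

definition improving_exchange :: "'a \<Rightarrow> 'a \<Rightarrow> 'a \<Rightarrow> 'a \<Rightarrow> bool" where
  "improving_exchange u v s t \<longleftrightarrow>
     gdist V E u t + gdist V E s v \<le> gdist V E u v + gdist V E s t \<and>
     endpoint_sqdist u t + endpoint_sqdist s v < endpoint_sqdist u v + endpoint_sqdist s t"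

lemma improving_exchange_transpose:
  assumes "u \<in> V" "v \<in> V" "s \<in> V" "t \<in> V" "improving_exchange v u t s"
  shows "improving_exchange u v s t"
proof -
  have "gdist V E v s = gdist V E s v" "gdist V E t u = gdist V E u t"
    "gdist V E v u = gdist V E u v" "gdist V E t s = gdist V E s t"
    using gdist_sym assms(1-4) by auto
  then show ?thesis using assms(5)
    unfolding improving_exchange_def endpoint_sqdist_def by (simp add: power2_commute ac_simps)
qed

lemma gdist_exchange_le:
  assumes V: "u \<in> V" "v \<in> V" "s \<in> V" "t \<in> V" and "u \<noteq> v" "s \<noteq> t"
    and "overlap u t" "r u \<le> r s" "r t \<le> r v"
  shows "gdist V E u t + gdist V E s v \<le> gdist V E u v + gdist V E s t"
proof -
  have "gdist V E s v \<le> gdist V E s t \<or> gdist V E s v \<le> gdist V E u v"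
  proof (cases "overlap s v")
    case True
    then show ?thesis using gdist_le_1_if_overlap gdist_pos V \<open>s \<noteq> t\<close> by fastforce
  next
    case False
    then consider "r v < l s" | "r s < l v" unfolding overlap_def by linarith
    then show ?thesis
    proof cases
      case 1
      then show ?thesis using gdist_le_if_target_between V \<open>s \<noteq> t\<close> \<open>r t \<le> r v\<close> by blast
    next
      case 2
      then show ?thesis using gdist_le_if_source_between V \<open>u \<noteq> v\<close> \<open>r u \<le> r s\<close> by blast
    qed
  qed
  moreover have "gdist V E u t \<le> 1" using gdist_le_1_if_overlap V \<open>overlap u t\<close> by blast
  moreover have "1 \<le> gdist V E u v" "1 \<le> gdist V E s t"
    using gdist_pos V \<open>u \<noteq> v\<close> \<open>s \<noteq> t\<close> by auto
  ultimately show ?thesis by linarith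
qed

lemma endpoint_sqdist_exchange_less:
  assumes "l u < l s" "l t < l v" "r u \<le> r s" "r t \<le> r v"
  shows "endpoint_sqdist u t + endpoint_sqdist s v < endpoint_sqdist u v + endpoint_sqdist s t"
proof -
  have "(l u - l s) * (l v - l t) < 0" using assms(1,2) by (simp add: mult_neg_pos)
  moreover have "(r u - r s) * (r v - r t) \<le> 0" using assms(3,4) by (simp add: mult_nonpos_nonneg)
  ultimately show ?thesis
    unfolding endpoint_sqdist_def
    using square_exchange[of "l u" "l t" "l s" "l v"] square_exchange[of "r u" "r t" "r s" "r v"]
    by linarith
qed

lemma private_vertex_towards:
  assumes A: "dominating_mset V E A" and V: "u \<in> V" "v \<in> V" and "u \<noteq> v" "r u \<le> r v"
    and stuck: "\<And>u'. u' \<in> succ V E u v \<Longrightarrow> \<not> dominating_mset V E (slide A u u')"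
  shows "\<exists>w\<in>V. overlap u w \<and> (\<forall>z\<in>#A - {#u#}. \<not> overlap z w) \<and> r w < l v \<and> r w \<le> r u"
proof -
  obtain u' where u': "u' \<in> succ V E u v" "overlap u u'" "r u \<le> r u'" "l u' \<le> l v"
    using succ_towards_right[OF V assms(4,5)] by blast
  have "u' \<in> V" using u'(1) by (rule succ_in_vertices)
  then obtain w where w: "w \<in> V" "overlap u w" "\<not> overlap u' w"
    "\<forall>z\<in>#A - {#u#}. \<not> overlap z w"
    using private_vertex_if_slide_fails[OF A \<open>u' \<in> V\<close> stuck[OF u'(1)]] by blast
  have "r w < l u'" using w(2,3) u'(3) unfolding overlap_def by linarith
  then have "r w < l v" "r w \<le> r u" using u'(2,4) unfolding overlap_def by linarith+
  with w show ?thesis by blast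
qed

text \<open>The private vertex \<open>w\<close> of \<open>u\<close> lies left of \<open>v\<close>; the vertex \<open>t\<close> of \<open>B\<close> dominating it
  is matched to some \<open>s\<close>, and a private vertex \<open>x\<close> of \<open>v\<close> in \<open>B\<close> forces \<open>r t \<le> r v\<close>.\<close>
lemma improving_exchange_at_leftmost_pair:
  assumes M: "is_matching A B M" and uv: "(u, v) \<in># M" "u \<noteq> v"
    and A: "dominating_mset V E A" and B: "dominating_mset V E B" and "r u \<le> r v"
    and leftmost: "\<And>a b. (a, b) \<in># M \<Longrightarrow> a \<noteq> b \<Longrightarrow> r u \<le> r a \<and> r u \<le> r b"
    and stuck_u: "\<And>u'. u' \<in> succ V E u v \<Longrightarrow> \<not> dominating_mset V E (slide A u u')"
    and stuck_v: "\<And>v'. v' \<in> succ V E v u \<Longrightarrow> \<not> dominating_mset V E (slide B v v')"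
  shows "\<exists>(s, t)\<in>#M - {#(u, v)#}. improving_exchange u v s t"
proof -
  have AV: "set_mset A \<subseteq> V" and BV: "set_mset B \<subseteq> V"
    using A B unfolding dominating_mset_def by auto
  have uV: "u \<in> V" and vV: "v \<in> V" using is_matching_memD[OF M uv(1)] AV BV by auto
  obtain w where w: "w \<in> V" "overlap u w" "\<forall>z\<in>#A - {#u#}. \<not> overlap z w"
    "r w < l v" "r w \<le> r u"
    using private_vertex_towards[OF A uV vV uv(2) \<open>r u \<le> r v\<close> stuck_u] by blast
  have "v \<noteq> u" using uv(2) by simp
  then obtain v' where v': "v' \<in> succ V E v u" using succ_nonempty[OF vV uV] by blast
  then have "v' \<in> V" by (rule succ_in_vertices)
  obtain x where x: "x \<in> V" "overlap v x" "\<not> overlap v' x"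
    "\<forall>z\<in>#B - {#v#}. \<not> overlap z x"
    using private_vertex_if_slide_fails[OF B \<open>v' \<in> V\<close> stuck_v[OF v']] by blast
  obtain t where t: "t \<in># B" "overlap t w" using dominating_overlap[OF B w(1)] by blast
  have "t \<noteq> v" using t(2) w(4) unfolding overlap_def by auto
  obtain s where "(s, t) \<in># M" using is_matching_partner[OF M t(1)] by blast
  with \<open>t \<noteq> v\<close> have st: "(s, t) \<in># M - {#(u, v)#}" by (simp add: in_diff_count)
  then have "s \<in># A - {#u#}" "t \<in># B - {#v#}"
    using is_matching_memD[OF is_matching_remove[OF M uv(1)]] by auto
  then have "\<not> overlap s w" "\<not> overlap t x" and sV: "s \<in> V" and tV: "t \<in> V"
    using w(3) x(4) AV BV by (auto dest: in_diffD)
  have "s \<noteq> t" using \<open>\<not> overlap s w\<close> t(2) by auto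
  then have "r u \<le> r s" "r u \<le> r t" using leftmost st by (auto dest: in_diffD)
  have "l u < l s" using \<open>\<not> overlap s w\<close> w(2) \<open>r u \<le> r s\<close> unfolding overlap_def by linarith
  moreover have "l t < l v" using t(2) w(4) unfolding overlap_def by linarith
  moreover have "r t \<le> r v"
    using \<open>\<not> overlap t x\<close> x(2) t(2) w(4) unfolding overlap_def by linarith
  moreover have "overlap u t"
    using t(2) w(5) \<open>r u \<le> r t\<close> interval_le uV unfolding overlap_def by force
  ultimately have "improving_exchange u v s t"
    unfolding improving_exchange_def
    using gdist_exchange_le[OF uV vV sV tV uv(2) \<open>s \<noteq> t\<close>] endpoint_sqdist_exchange_less
      \<open>r u \<le> r s\<close> by blast
  with st show ?thesis by blast
qed

text \<open>The pair \<open>(u, v)\<close> is the mismatched pair with the smallest right endpoint; the case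
  \<open>r v < r u\<close> is reduced to the previous lemma by transposing the matching.\<close>
lemma improving_exchange_exists:
  assumes M: "is_matching A B M" and A: "dominating_mset V E A" and B: "dominating_mset V E B"
    and "A \<noteq> B"
    and stuck_A: "\<And>u v u'. (u, v) \<in># M \<Longrightarrow> u' \<in> succ V E u v \<Longrightarrow>
                    \<not> dominating_mset V E (slide A u u')"
    and stuck_B: "\<And>u v v'. (u, v) \<in># M \<Longrightarrow> v' \<in> succ V E v u \<Longrightarrow>
                    \<not> dominating_mset V E (slide B v v')"
  shows "\<exists>(u, v)\<in>#M. \<exists>(s, t)\<in>#M - {#(u, v)#}. improving_exchange u v s t"
proof -
  obtain u v where uv: "(u, v) \<in># M" "u \<noteq> v"
    and min: "\<And>a b. (a, b) \<in># M \<Longrightarrow> a \<noteq> b \<Longrightarrow> min (r u) (r v) \<le> min (r a) (r b)"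
    using mismatched_pair_minimizing[OF M \<open>A \<noteq> B\<close>, where f = "\<lambda>a b. min (r a) (r b)"]
    by blast
  show ?thesis
  proof (cases "r u \<le> r v")
    case True
    have "r u \<le> r a \<and> r u \<le> r b" if "(a, b) \<in># M" "a \<noteq> b" for a b
      using min[OF that] True by linarith
    then have "\<exists>(s, t)\<in>#M - {#(u, v)#}. improving_exchange u v s t"
      using improving_exchange_at_leftmost_pair[OF M uv A B True _ stuck_A[OF uv(1)]
          stuck_B[OF uv(1)]] by blast
    with uv(1) show ?thesis by blast
  next
    case False
    let ?MT = "image_mset prod.swap M"
    have MT: "is_matching B A ?MT" using is_matching_transpose[OF M] .
    have vu: "(v, u) \<in># ?MT" "v \<noteq> u" using uv by force+
    have "r v \<le> r b \<and> r v \<le> r a" if "(b, a) \<in># ?MT" "b \<noteq> a" for a b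
      using min[of a b] that False by force
    then obtain t s where ts: "(t, s) \<in># ?MT - {#(v, u)#}" and "improving_exchange v u t s"
      using improving_exchange_at_leftmost_pair[OF MT vu B A _ _ stuck_B[OF uv(1)]
          stuck_A[OF uv(1)]] False by fastforce
    have "?MT - {#(v, u)#} = image_mset prod.swap (M - {#(u, v)#})"
      using image_mset_Diff[of "{#(u, v)#}" M prod.swap] uv(1) by simp
    then have st: "(s, t) \<in># M - {#(u, v)#}" using ts by auto
    then have "s \<in> V" "t \<in> V" "u \<in> V" "v \<in> V"
      using is_matching_memD[OF M] uv(1) A B unfolding dominating_mset_def
      by (auto dest!: in_diffD)
    then have "improving_exchange u v s t"
      using improving_exchange_transpose \<open>improving_exchange v u t s\<close> by blast
    with uv(1) st show ?thesis by blast
  qed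
qed

end

theorem mainTheorem8:
  fixes V :: "'a set" and E :: "'a \<Rightarrow> 'a \<Rightarrow> bool" and Ds Dt :: "'a multiset"
  assumes "interval_graph V E"
    and "connected_graph V E"
    and "dominating_mset V E Ds" and "dominating_mset V E Dt"
    and "Ds \<noteq> Dt"
    and "size Ds = size Dt"
  shows "\<exists>M. min_cost_matching V E Ds Dt M \<and>
           ((\<exists>(u,v)\<in>#M. \<exists>u'\<in>succ V E u v. dominating_mset V E (slide Ds u u')) \<or>
            (\<exists>(u,v)\<in>#M. \<exists>v'\<in>succ V E v u. dominating_mset V E (slide Dt v v')))"
proof -
  obtain l r :: "'a \<Rightarrow> real" where lr: "\<forall>v\<in>V. l v \<le> r v"
    and adj: "\<forall>u\<in>V. \<forall>v\<in>V. u \<noteq> v \<longrightarrow> (E u v \<longleftrightarrow> max (l u) (l v) \<le> min (r u) (r v))"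
    using assms(1) unfolding interval_graph_def by blast
  interpret interval_model V E l r
    using assms(1,2) lr adj unfolding interval_graph_def by unfold_locales auto
  let ?pot = "\<lambda>M. \<Sum>(a, b)\<in>#M. endpoint_sqdist a b"
  obtain M where M: "min_cost_matching V E Ds Dt M"
    and pot_min: "\<And>M'. min_cost_matching V E Ds Dt M' \<Longrightarrow> ?pot M \<le> ?pot M'"
    using min_cost_matching_exists_minimizing[OF assms(6), of V E ?pot] by blast
  have "(\<exists>(u,v)\<in>#M. \<exists>u'\<in>succ V E u v. dominating_mset V E (slide Ds u u')) \<or>
        (\<exists>(u,v)\<in>#M. \<exists>v'\<in>succ V E v u. dominating_mset V E (slide Dt v v'))"
  proof (rule ccontr)
    assume stuck: "\<not> ?thesis"
    have "is_matching Ds Dt M" using M unfolding min_cost_matching_def by blast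
    then have "\<exists>(u, v)\<in>#M. \<exists>(s, t)\<in>#M - {#(u, v)#}. improving_exchange u v s t"
      using improving_exchange_exists[OF _ assms(3-5)] stuck by blast
    then obtain u v s t where uv: "(u, v) \<in># M" and st: "(s, t) \<in># M - {#(u, v)#}"
      and improving: "improving_exchange u v s t" by blast
    let ?M' = "exchange_partners M u v s t"
    have "min_cost_matching V E Ds Dt ?M'"
      using min_cost_matching_exchange_partners[OF M uv st] improving
      unfolding improving_exchange_def by blast
    moreover have "?pot ?M' < ?pot M"
      using sum_exchange_partners[OF uv st, of endpoint_sqdist] improving
      unfolding improving_exchange_def by linarith
    ultimately show False using pot_min by fastforce
  qed
  with M show ?thesis by blast
qed

end
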